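(* Let $Y$ be a polygonal complex and let $G(Y)$ be a developable complex of groups over $Y$ whose universal cover is Bourdon's building $I_{p,v}$. Then the indexing $\mathrm{Ind}_{G(Y)}$ induced by $G(Y)$ is $v$-thick.
   Context: Let $Y'$ be the first barycentric subdivision of $Y$. Its vertices are barycenters of cells of $Y$. Each edge $a$ of $Y'$ joins the barycenters of cells $\tau \subsetneq \tau'$ and is oriented from $i(a) = \tau'$ to $t(a) = \tau$. A complex of groups $G(Y)$ assigns: - a group $G_\tau$ to each vertex of $Y'$; - a monomorphism $\psi_a : G_{i(a)} \to G_{t(a)}$ to each edge $a$; - twisting elements $g_{a,b} \in G_{t(a)}$ for composable pairs, satisfying $\mathrm{Ad}(g_{a,b})\psi_{ab} = \psi_a\psi_b$. An action without inversions of a group on a simply connected polygonal complex $X$ induces a complex of groups over the quotient, with local groups the stabilizers of chosen lifts of cells. $G(Y)$ is developable if it is isomorphic to a complex of groups arising in this way; $X$ is then its universal cover. For $p \geq 5$ and $v \geq 2$, Bourdon's building $I_{p,v}$ is the unique simply connected polygonal $2$-complex whose $2$-cells are regular right-angled hyperbolic $p$-gons and whose vertex links are $K_{v,v}$; it is locally finite, so all indices below are finite. The induced indexing assigns to each edge $a$ of $Y'$ the integer $\mathrm{Ind}_{G(Y)}(a) = |G_{t(a)} : \psi_a(G_{i(a)})|$. An indexing $\mathrm{Ind}$ of $Y'$ (a positive integer for each edge of $Y'$) is $v$-thick if, for every vertex $\sigma$ of $Y'$ that is the midpoint of an edge of $Y$, $\sum_{a : t(a) = \sigma} \mathrm{Ind}(a)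 = v$. *)

theory Defs
  imports "HOL-Algebra.Coset"
begin

section \<open>Combinatorial polygonal 2-complexes\<close>

text \<open>A polygonal 2-complex is given combinatorially by a set of cells XC, a dimension
function dX (values 0, 1, 2) and the strict face relation fX (fX a c: a is a proper face of c).\<close>

definition vfaces :: "('x \<Rightarrow> nat) \<Rightarrow> ('x \<Rightarrow> 'x \<Rightarrow> bool) \<Rightarrow> 'x \<Rightarrow> 'x set" where
  "vfaces dX fX c = {y. fX y c \<and> dX y = 0}"

definition efaces :: "('x \<Rightarrow> nat) \<Rightarrow> ('x \<Rightarrow> 'x \<Rightarrow> bool) \<Rightarrow> 'x \<Rightarrow> 'x set" where
  "efaces dX fX c = {y. fX y c \<and> dX y = 1}"

definition p_gon_cell :: "nat \<Rightarrow> ('x \<Rightarrow> nat) \<Rightarrow> ('x \<Rightarrow> 'x \<Rightarrow> bool) \<Rightarrow> 'x \<Rightarrow> bool" where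
  "p_gon_cell p dX fX c \<longleftrightarrow>
     (\<exists>xs es. length xs = p \<and> length es = p \<and> distinct xs \<and> distinct es \<and>
        vfaces dX fX c = set xs \<and> efaces dX fX c = set es \<and>
        (\<forall>j<p. vfaces dX fX (es ! j) = {xs ! j, xs ! ((j + 1) mod p)}))"

definition polygonal_complex :: "nat \<Rightarrow> 'x set \<Rightarrow> ('x \<Rightarrow> nat) \<Rightarrow> ('x \<Rightarrow> 'x \<Rightarrow> bool) \<Rightarrow> bool" where
  "polygonal_complex p XC dX fX \<longleftrightarrow>
     (\<forall>c\<in>XC. dX c \<le> 2) \<and>
     (\<forall>a c. fX a c \<longrightarrow> a \<in> XC \<and> c \<in> XC \<and> dX a < dX c) \<and>
     (\<forall>a b c. fX a b \<longrightarrow> fX b c \<longrightarrow> fX a c) \<and>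
     (\<forall>e\<in>XC. dX e = 1 \<longrightarrow> finite (vfaces dX fX e) \<and> card (vfaces dX fX e) = 2) \<and>
     (\<forall>c\<in>XC. dX c = 2 \<longrightarrow> p_gon_cell p dX fX c)"

text \<open>The link of every vertex is the complete bipartite graph K_{v,v}: link vertices are the
edges at x, and two link vertices are joined by one link edge for each 2-cell containing both.\<close>
definition links_Kvv :: "nat \<Rightarrow> 'x set \<Rightarrow> ('x \<Rightarrow> nat) \<Rightarrow> ('x \<Rightarrow> 'x \<Rightarrow> bool) \<Rightarrow> bool" where
  "links_Kvv v XC dX fX \<longleftrightarrow>
     (\<forall>x\<in>XC. dX x = 0 \<longrightarrow>
       (let L = {e\<in>XC. dX e = 1 \<and> fX x e} in
        \<exists>A B. A \<union> B = L \<and> A \<inter> B = {} \<and> finite A \<and> finite B \<and> card A = v \<and> card B = v \<and>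
          (\<forall>e1\<in>L. \<forall>e2\<in>L. e1 \<noteq> e2 \<longrightarrow>
             (let F = {c\<in>XC. dX c = 2 \<and> fX e1 c \<and> fX e2 c} in
              finite F \<and> card F = (if (e1 \<in> A \<longleftrightarrow> e2 \<in> B) then 1 else 0)))))"

text \<open>Oriented edges (e, a, b): e traversed from a to b.\<close>
definition oedges :: "'x set \<Rightarrow> ('x \<Rightarrow> nat) \<Rightarrow> ('x \<Rightarrow> 'x \<Rightarrow> bool) \<Rightarrow> ('x \<times> 'x \<times> 'x) set" where
  "oedges XC dX fX = {(e, a, b). e \<in> XC \<and> dX e = 1 \<and> a \<noteq> b \<and> vfaces dX fX e = {a, b}}"

fun chained :: "('x \<times> 'x \<times> 'x) list \<Rightarrow> bool" where
  "chained [] = True"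
| "chained [_] = True"
| "chained ((e, a, b) # (e', a', b') # r) = (b = a' \<and> chained ((e', a', b') # r))"

definition epath :: "'x set \<Rightarrow> ('x \<Rightarrow> nat) \<Rightarrow> ('x \<Rightarrow> 'x \<Rightarrow> bool) \<Rightarrow> ('x \<times> 'x \<times> 'x) list \<Rightarrow> bool" where
  "epath XC dX fX ws \<longleftrightarrow> set ws \<subseteq> oedges XC dX fX \<and> chained ws"

definition pstart :: "('x \<times> 'x \<times> 'x) list \<Rightarrow> 'x" where
  "pstart ws = fst (snd (hd ws))"

definition pend :: "('x \<times> 'x \<times> 'x) list \<Rightarrow> 'x" where
  "pend ws = snd (snd (last ws))"

definition closed_path :: "('x \<times> 'x \<times> 'x) list \<Rightarrow> bool" where
  "closed_path ws \<longleftrightarrow> ws = [] \<or> pstart ws = pend ws"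

definition boundary_loop :: "'x set \<Rightarrow> ('x \<Rightarrow> nat) \<Rightarrow> ('x \<Rightarrow> 'x \<Rightarrow> bool) \<Rightarrow> 'x \<Rightarrow> ('x \<times> 'x \<times> 'x) list \<Rightarrow> bool" where
  "boundary_loop XC dX fX f c \<longleftrightarrow> f \<in> XC \<and> dX f = 2 \<and> c \<noteq> [] \<and> epath XC dX fX c \<and> closed_path c \<and>
     distinct (map fst c) \<and> set (map fst c) = efaces dX fX f"

text \<open>Elementary homotopies of edge paths: removing a backtrack, or removing a boundary loop of a 2-cell.\<close>
definition elem_htp :: "'x set \<Rightarrow> ('x \<Rightarrow> nat) \<Rightarrow> ('x \<Rightarrow> 'x \<Rightarrow> bool) \<Rightarrow>
    (('x \<times> 'x \<times> 'x) list \<times> ('x \<times> 'x \<times> 'x) list) set" where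
  "elem_htp XC dX fX = {(P, Q). epath XC dX fX P \<and>
     ((\<exists>u w e a b. P = u @ [(e, a, b), (e, b, a)] @ w \<and> Q = u @ w) \<or>
      (\<exists>u w c f. P = u @ c @ w \<and> Q = u @ w \<and> boundary_loop XC dX fX f c))}"

definition simply_connected_cx :: "'x set \<Rightarrow> ('x \<Rightarrow> nat) \<Rightarrow> ('x \<Rightarrow> 'x \<Rightarrow> bool) \<Rightarrow> bool" where
  "simply_connected_cx XC dX fX \<longleftrightarrow>
     XC \<noteq> {} \<and>
     (\<forall>a\<in>XC. \<forall>b\<in>XC. dX a = 0 \<longrightarrow> dX b = 0 \<longrightarrow>
        (\<exists>ws. epath XC dX fX ws \<and> ((ws = [] \<and> a = b) \<or> (ws \<noteq> [] \<and> pstart ws = a \<and> pend ws = b)))) \<and>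
     (\<forall>ws. epath XC dX fX ws \<longrightarrow> closed_path ws \<longrightarrow>
        (ws, []) \<in> (elem_htp XC dX fX \<union> (elem_htp XC dX fX)\<inverse>)\<^sup>*)"

text \<open>Bourdon's building I_{p,v}: the (unique) simply connected polygonal 2-complex whose 2-cells are
p-gons and whose vertex links are K_{v,v} (its metric realisation uses regular right-angled hyperbolic
p-gons). A complex satisfying this predicate is thus (isomorphic to) I_{p,v}.\<close>
definition bourdon_building :: "nat \<Rightarrow> nat \<Rightarrow> 'x set \<Rightarrow> ('x \<Rightarrow> nat) \<Rightarrow> ('x \<Rightarrow> 'x \<Rightarrow> bool) \<Rightarrow> bool" where
  "bourdon_building p v XC dX fX \<longleftrightarrow>
     polygonal_complex p XC dX fX \<and> links_Kvv v XC dX fX \<and> simply_connected_cx XC dX fX"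

section \<open>Complexes of groups over the scwol Y'\<close>

text \<open>Y' is given by vertex set V (barycenters of cells of Y, with dimension dimY), edge set E,
initial/terminal vertex maps src = i and tgt = t, and composition cmp a b = ab for i(a) = t(b).\<close>
definition complex_of_groups ::
  "'v set \<Rightarrow> 'e set \<Rightarrow> ('e \<Rightarrow> 'v) \<Rightarrow> ('e \<Rightarrow> 'v) \<Rightarrow> ('e \<Rightarrow> 'e \<Rightarrow> 'e) \<Rightarrow>
   ('v \<Rightarrow> 'g monoid) \<Rightarrow> ('e \<Rightarrow> 'g \<Rightarrow> 'g) \<Rightarrow> ('e \<Rightarrow> 'e \<Rightarrow> 'g) \<Rightarrow> bool" where
  "complex_of_groups V E src tgt cmp Gs psi tw \<longleftrightarrow>
     (\<forall>\<sigma>\<in>V. group (Gs \<sigma>)) \<and>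
     (\<forall>a\<in>E. src a \<in> V \<and> tgt a \<in> V \<and> psi a \<in> hom (Gs (src a)) (Gs (tgt a)) \<and>
            inj_on (psi a) (carrier (Gs (src a)))) \<and>
     (\<forall>a\<in>E. \<forall>b\<in>E. src a = tgt b \<longrightarrow>
        cmp a b \<in> E \<and> src (cmp a b) = src b \<and> tgt (cmp a b) = tgt a \<and>
        tw a b \<in> carrier (Gs (tgt a)) \<and>
        (\<forall>x\<in>carrier (Gs (src b)).
           tw a b \<otimes>\<^bsub>Gs (tgt a)\<^esub> psi (cmp a b) x \<otimes>\<^bsub>Gs (tgt a)\<^esub> inv\<^bsub>Gs (tgt a)\<^esub> (tw a b)
           = psi a (psi b x)))"

section \<open>Group actions and the induced complex of groups\<close>

text \<open>H acts on X by automorphisms of the polygonal complex, without inversions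
(an element stabilising a cell fixes it pointwise, i.e. fixes all of its faces).\<close>
definition acts_without_inversions ::
  "'h monoid \<Rightarrow> ('h \<Rightarrow> 'x \<Rightarrow> 'x) \<Rightarrow> 'x set \<Rightarrow> ('x \<Rightarrow> nat) \<Rightarrow> ('x \<Rightarrow> 'x \<Rightarrow> bool) \<Rightarrow> bool" where
  "acts_without_inversions H act XC dX fX \<longleftrightarrow>
     group H \<and>
     (\<forall>h\<in>carrier H. bij_betw (act h) XC XC) \<and>
     (\<forall>x\<in>XC. act \<one>\<^bsub>H\<^esub> x = x) \<and>
     (\<forall>g\<in>carrier H. \<forall>h\<in>carrier H. \<forall>x\<in>XC. act (g \<otimes>\<^bsub>H\<^esub> h) x = act g (act h x)) \<and>
     (\<forall>h\<in>carrier H. \<forall>x\<in>XC. dX (act h x) = dX x) \<and>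
     (\<forall>h\<in>carrier H. \<forall>a\<in>XC. \<forall>c\<in>XC. fX (act h a) (act h c) \<longleftrightarrow> fX a c) \<and>
     (\<forall>h\<in>carrier H. \<forall>c\<in>XC. act h c = c \<longrightarrow> (\<forall>a. fX a c \<longrightarrow> act h a = a))"

text \<open>pv, pe identify the quotient scwol X'/H with Y' (pe c a is the image of the edge of X'
from the barycenter of c to that of its face a).\<close>
definition quotient_iso ::
  "'h monoid \<Rightarrow> ('h \<Rightarrow> 'x \<Rightarrow> 'x) \<Rightarrow> 'x set \<Rightarrow> ('x \<Rightarrow> nat) \<Rightarrow> ('x \<Rightarrow> 'x \<Rightarrow> bool) \<Rightarrow>
   'v set \<Rightarrow> 'e set \<Rightarrow> ('e \<Rightarrow> 'v) \<Rightarrow> ('e \<Rightarrow> 'v) \<Rightarrow> ('e \<Rightarrow> 'e \<Rightarrow> 'e) \<Rightarrow> ('v \<Rightarrow> nat) \<Rightarrow>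
   ('x \<Rightarrow> 'v) \<Rightarrow> ('x \<Rightarrow> 'x \<Rightarrow> 'e) \<Rightarrow> bool" where
  "quotient_iso H act XC dX fX V E src tgt cmp dimY pv pe \<longleftrightarrow>
     pv ` XC = V \<and>
     (\<forall>x\<in>XC. dimY (pv x) = dX x) \<and>
     (\<forall>x\<in>XC. \<forall>y\<in>XC. pv x = pv y \<longleftrightarrow> (\<exists>h\<in>carrier H. act h x = y)) \<and>
     {pe c a | c a. fX a c} = E \<and>
     (\<forall>a c. fX a c \<longrightarrow> src (pe c a) = pv c \<and> tgt (pe c a) = pv a) \<and>
     (\<forall>a c a' c'. fX a c \<longrightarrow> fX a' c' \<longrightarrow>
        (pe c a = pe c' a' \<longleftrightarrow> (\<exists>h\<in>carrier H. act h c = c' \<and> act h a = a'))) \<and>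
     (\<forall>a b c. fX a b \<longrightarrow> fX b c \<longrightarrow> cmp (pe b a) (pe c b) = pe c a)"

definition stab :: "'h monoid \<Rightarrow> ('h \<Rightarrow> 'x \<Rightarrow> 'x) \<Rightarrow> 'x \<Rightarrow> 'h set" where
  "stab H act x = {h\<in>carrier H. act h x = x}"

text \<open>Choice data for the induced complex of groups: lifts of the vertices of Y' and elements h_a
with h_a . lift(i(a)) having lift(t(a)) as a face, this edge of X' lying over a.\<close>
definition lift_data ::
  "'h monoid \<Rightarrow> ('h \<Rightarrow> 'x \<Rightarrow> 'x) \<Rightarrow> 'x set \<Rightarrow> ('x \<Rightarrow> 'x \<Rightarrow> bool) \<Rightarrow>
   'v set \<Rightarrow> 'e set \<Rightarrow> ('e \<Rightarrow> 'v) \<Rightarrow> ('e \<Rightarrow> 'v) \<Rightarrow> ('x \<Rightarrow> 'v) \<Rightarrow> ('x \<Rightarrow> 'x \<Rightarrow> 'e) \<Rightarrow>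
   ('v \<Rightarrow> 'x) \<Rightarrow> ('e \<Rightarrow> 'h) \<Rightarrow> bool" where
  "lift_data H act XC fX V E src tgt pv pe lift hs \<longleftrightarrow>
     (\<forall>\<sigma>\<in>V. lift \<sigma> \<in> XC \<and> pv (lift \<sigma>) = \<sigma>) \<and>
     (\<forall>a\<in>E. hs a \<in> carrier H \<and> fX (lift (tgt a)) (act (hs a) (lift (src a))) \<and>
            pe (act (hs a) (lift (src a))) (lift (tgt a)) = a)"

text \<open>The induced complex of groups: local groups are stabilisers of the lifts,
psi_a = Ad(h_a), g_{a,b} = h_a h_b h_{ab}^{-1}.\<close>
definition ind_group :: "'h monoid \<Rightarrow> ('h \<Rightarrow> 'x \<Rightarrow> 'x) \<Rightarrow> ('v \<Rightarrow> 'x) \<Rightarrow> 'v \<Rightarrow> 'h monoid" where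
  "ind_group H act lift \<sigma> = H\<lparr>carrier := stab H act (lift \<sigma>)\<rparr>"

definition ind_psi :: "'h monoid \<Rightarrow> ('e \<Rightarrow> 'h) \<Rightarrow> 'e \<Rightarrow> 'h \<Rightarrow> 'h" where
  "ind_psi H hs a g = hs a \<otimes>\<^bsub>H\<^esub> g \<otimes>\<^bsub>H\<^esub> inv\<^bsub>H\<^esub> (hs a)"

definition ind_tw :: "'h monoid \<Rightarrow> ('e \<Rightarrow> 'h) \<Rightarrow> ('e \<Rightarrow> 'e \<Rightarrow> 'e) \<Rightarrow> 'e \<Rightarrow> 'e \<Rightarrow> 'h" where
  "ind_tw H hs cmp a b = hs a \<otimes>\<^bsub>H\<^esub> hs b \<otimes>\<^bsub>H\<^esub> inv\<^bsub>H\<^esub> (hs (cmp a b))"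

text \<open>Isomorphism (over the identity of Y') of complexes of groups (Gs, psi, tw) -> (Gs', psi', tw')
in the sense of Bridson-Haefliger III.C.2.4.\<close>
definition cog_iso ::
  "'v set \<Rightarrow> 'e set \<Rightarrow> ('e \<Rightarrow> 'v) \<Rightarrow> ('e \<Rightarrow> 'v) \<Rightarrow> ('e \<Rightarrow> 'e \<Rightarrow> 'e) \<Rightarrow>
   ('v \<Rightarrow> 'g monoid) \<Rightarrow> ('e \<Rightarrow> 'g \<Rightarrow> 'g) \<Rightarrow> ('e \<Rightarrow> 'e \<Rightarrow> 'g) \<Rightarrow>
   ('v \<Rightarrow> 'h monoid) \<Rightarrow> ('e \<Rightarrow> 'h \<Rightarrow> 'h) \<Rightarrow> ('e \<Rightarrow> 'e \<Rightarrow> 'h) \<Rightarrow>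
   ('v \<Rightarrow> 'g \<Rightarrow> 'h) \<Rightarrow> ('e \<Rightarrow> 'h) \<Rightarrow> bool" where
  "cog_iso V E src tgt cmp Gs psi tw Gs' psi' tw' phi phie \<longleftrightarrow>
     (\<forall>\<sigma>\<in>V. phi \<sigma> \<in> iso (Gs \<sigma>) (Gs' \<sigma>)) \<and>
     (\<forall>a\<in>E. phie a \<in> carrier (Gs' (tgt a)) \<and>
        (\<forall>x\<in>carrier (Gs (src a)).
           phie a \<otimes>\<^bsub>Gs' (tgt a)\<^esub> psi' a (phi (src a) x) \<otimes>\<^bsub>Gs' (tgt a)\<^esub> inv\<^bsub>Gs' (tgt a)\<^esub> (phie a)
           = phi (tgt a) (psi a x))) \<and>
     (\<forall>a\<in>E. \<forall>b\<in>E. src a = tgt b \<longrightarrow>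
        phi (tgt a) (tw a b) \<otimes>\<^bsub>Gs' (tgt a)\<^esub> phie (cmp a b)
        = phie a \<otimes>\<^bsub>Gs' (tgt a)\<^esub> psi' a (phie b) \<otimes>\<^bsub>Gs' (tgt a)\<^esub> tw' a b)"

text \<open>G(Y) is developable with universal cover the complex (XC, dX, fX): it is isomorphic to the
complex of groups induced by an action without inversions of a group H on XC with quotient Y.\<close>
definition developable_with_cover ::
  "'x set \<Rightarrow> ('x \<Rightarrow> nat) \<Rightarrow> ('x \<Rightarrow> 'x \<Rightarrow> bool) \<Rightarrow> 'h monoid \<Rightarrow> ('h \<Rightarrow> 'x \<Rightarrow> 'x) \<Rightarrow>
   ('x \<Rightarrow> 'v) \<Rightarrow> ('x \<Rightarrow> 'x \<Rightarrow> 'e) \<Rightarrow> ('v \<Rightarrow> 'x) \<Rightarrow> ('e \<Rightarrow> 'h) \<Rightarrow> ('v \<Rightarrow> 'g \<Rightarrow> 'h) \<Rightarrow> ('e \<Rightarrow> 'h) \<Rightarrow>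
   'v set \<Rightarrow> 'e set \<Rightarrow> ('e \<Rightarrow> 'v) \<Rightarrow> ('e \<Rightarrow> 'v) \<Rightarrow> ('e \<Rightarrow> 'e \<Rightarrow> 'e) \<Rightarrow> ('v \<Rightarrow> nat) \<Rightarrow>
   ('v \<Rightarrow> 'g monoid) \<Rightarrow> ('e \<Rightarrow> 'g \<Rightarrow> 'g) \<Rightarrow> ('e \<Rightarrow> 'e \<Rightarrow> 'g) \<Rightarrow> bool" where
  "developable_with_cover XC dX fX H act pv pe lift hs phi phie V E src tgt cmp dimY Gs psi tw \<longleftrightarrow>
     acts_without_inversions H act XC dX fX \<and>
     quotient_iso H act XC dX fX V E src tgt cmp dimY pv pe \<and>
     lift_data H act XC fX V E src tgt pv pe lift hs \<and>
     cog_iso V E src tgt cmp Gs psi tw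
        (ind_group H act lift) (ind_psi H hs) (ind_tw H hs cmp) phi phie"

definition induced_indexing ::
  "('e \<Rightarrow> 'v) \<Rightarrow> ('e \<Rightarrow> 'v) \<Rightarrow> ('v \<Rightarrow> 'g monoid) \<Rightarrow> ('e \<Rightarrow> 'g \<Rightarrow> 'g) \<Rightarrow> 'e \<Rightarrow> nat" where
  "induced_indexing src tgt Gs psi a =
     card (rcosets\<^bsub>Gs (tgt a)\<^esub> (psi a ` carrier (Gs (src a))))"

definition v_thick :: "nat \<Rightarrow> 'v set \<Rightarrow> 'e set \<Rightarrow> ('e \<Rightarrow> 'v) \<Rightarrow> ('v \<Rightarrow> nat) \<Rightarrow> ('e \<Rightarrow> nat) \<Rightarrow> bool" where
  "v_thick v V E tgt dimY Ind \<longleftrightarrow>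
     (\<forall>\<sigma>\<in>V. dimY \<sigma> = 1 \<longrightarrow> (\<Sum>a\<in>{a\<in>E. tgt a = \<sigma>}. Ind a) = v)"

end

theory Submission
  imports Defs "HOL-Algebra.Group_Action"
begin

text \<open>Let \<open>\<sigma>\<close> be the midpoint of an edge of \<open>Y\<close> and \<open>e\<close> its chosen lift, an edge of the
building. Through \<open>e\<close> pass exactly \<open>v\<close> polygons: at an endpoint \<open>x\<close> of \<open>e\<close> every polygon
containing \<open>e\<close> has exactly one further edge at \<open>x\<close>, and in the link \<open>K\<^sub>v\<^sub>,\<^sub>v\<close> these further
edges are exactly the \<open>v\<close> vertices on the other side, each met by exactly one polygon. The edges
\<open>a\<close> of \<open>Y'\<close> ending at \<open>\<sigma>\<close> correspond to the orbits of the stabiliser of \<open>e\<close> on these polygons,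
and after conjugating by the isomorphism with the induced complex of groups, the image of
\<open>\<psi>\<^sub>a\<close> becomes the stabiliser of a polygon \<open>c\<close> in that orbit, so \<open>Ind(a)\<close> is the orbit size by the
orbit-stabiliser bijection. Summing over the orbits gives \<open>v\<close>.\<close>

lemma Suc_mod_eq_iff_eq_pred_mod:
  fixes i j p :: nat
  assumes "i < p" "j < p"
  shows "(j + 1) mod p = i \<longleftrightarrow> j = (i + p - 1) mod p"
  using assms by (cases "i = 0"; cases "j + 1 = p") (auto simp: mod_if)

lemma p_gon_cell_card_edges_at_vertex:
  assumes pgon: "p_gon_cell p dX fX c" and "3 \<le> p" and x: "x \<in> vfaces dX fX c"
  shows "card {y \<in> efaces dX fX c. x \<in> vfaces dX fX y} = 2"
proof -
  obtain xs es where len: "length xs = p" "length es = p" and dist: "distinct xs" "distinct es"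
    and faces: "vfaces dX fX c = set xs" "efaces dX fX c = set es"
    and ends: "\<forall>j<p. vfaces dX fX (es ! j) = {xs ! j, xs ! ((j + 1) mod p)}"
    using pgon unfolding p_gon_cell_def by blast
  obtain i where i: "i < p" "x = xs ! i" using x faces len by (metis in_set_conv_nth)
  define k where "k = (i + p - 1) mod p"
  have k: "k < p" "k \<noteq> i" using i \<open>3 \<le> p\<close> by (auto simp: k_def mod_if)
  have at_x: "x \<in> vfaces dX fX (es ! j) \<longleftrightarrow> j = i \<or> j = k" if "j < p" for j
  proof -
    have "x \<in> vfaces dX fX (es ! j) \<longleftrightarrow> j = i \<or> (j + 1) mod p = i"
      using ends that i dist(1) len(1) by (auto simp: nth_eq_iff_index_eq)
    then show ?thesis using Suc_mod_eq_iff_eq_pred_mod[OF i(1) that] k_def by blast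
  qed
  have "{y \<in> efaces dX fX c. x \<in> vfaces dX fX y} = {es ! i, es ! k}"
    using at_x i k len(2) faces(2) by (auto simp: in_set_conv_nth)
  moreover have "es ! i \<noteq> es ! k" using i k len dist by (simp add: nth_eq_iff_index_eq)
  ultimately show ?thesis by simp
qed

lemma polygonal_complex_card_edges_of_cell_at_vertex:
  assumes "polygonal_complex p XC dX fX" and "3 \<le> p"
    and "c \<in> XC" "dX c = 2" and "fX x c" "dX x = 0"
  shows "card {y. fX y c \<and> dX y = 1 \<and> fX x y} = 2"
proof -
  have "p_gon_cell p dX fX c" using assms unfolding polygonal_complex_def by blast
  moreover have "x \<in> vfaces dX fX c" using assms unfolding vfaces_def by blast
  moreover have "{y. fX y c \<and> dX y = 1 \<and> fX x y} = {y \<in> efaces dX fX c. x \<in> vfaces dX fX y}"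
    using assms unfolding efaces_def vfaces_def by blast
  ultimately show ?thesis using p_gon_cell_card_edges_at_vertex \<open>3 \<le> p\<close> by simp
qed

lemma links_Kvv_neighbours:
  assumes LK: "links_Kvv v XC dX fX" and x: "x \<in> XC" "dX x = 0"
    and e: "e \<in> XC" "dX e = 1" "fX x e"
  obtains N where "finite {e' \<in> XC. dX e' = 1 \<and> fX x e'}"
    and "N \<subseteq> {e' \<in> XC. dX e' = 1 \<and> fX x e'} - {e}" and "card N = v"
    and "\<And>e'. e' \<in> {e' \<in> XC. dX e' = 1 \<and> fX x e'} - {e} \<Longrightarrow>
      finite {c \<in> XC. dX c = 2 \<and> fX e c \<and> fX e' c} \<and>
      card {c \<in> XC. dX c = 2 \<and> fX e c \<and> fX e' c} = (if e' \<in> N then 1 else 0)"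
proof -
  define L where "L = {e' \<in> XC. dX e' = 1 \<and> fX x e'}"
  have "\<exists>A B. A \<union> B = L \<and> A \<inter> B = {} \<and> finite A \<and> finite B \<and> card A = v \<and> card B = v \<and>
      (\<forall>e1\<in>L. \<forall>e2\<in>L. e1 \<noteq> e2 \<longrightarrow>
         finite {c \<in> XC. dX c = 2 \<and> fX e1 c \<and> fX e2 c} \<and>
         card {c \<in> XC. dX c = 2 \<and> fX e1 c \<and> fX e2 c} = (if e1 \<in> A \<longleftrightarrow> e2 \<in> B then 1 else 0))"
    using LK x unfolding links_Kvv_def Let_def L_def by blast
  then obtain A B where AB: "A \<union> B = L" "A \<inter> B = {}" "finite A" "finite B" "card A = v" "card B = v"
    and link: "\<forall>e1\<in>L. \<forall>e2\<in>L. e1 \<noteq> e2 \<longrightarrow>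
       finite {c \<in> XC. dX c = 2 \<and> fX e1 c \<and> fX e2 c} \<and>
       card {c \<in> XC. dX c = 2 \<and> fX e1 c \<and> fX e2 c} = (if e1 \<in> A \<longleftrightarrow> e2 \<in> B then 1 else 0)"
    by blast
  have eL: "e \<in> L" using e by (simp add: L_def)
  define N where "N = (if e \<in> A then B else A)"
  show thesis
  proof
    show "finite {e' \<in> XC. dX e' = 1 \<and> fX x e'}" using AB(1,3,4) unfolding L_def by (metis finite_Un)
    show "N \<subseteq> {e' \<in> XC. dX e' = 1 \<and> fX x e'} - {e}" "card N = v"
      using AB(1,2,5,6) eL unfolding N_def L_def by (auto split: if_splits)
  next
    fix e' assume "e' \<in> {e' \<in> XC. dX e' = 1 \<and> fX x e'} - {e}"
    then have e': "e' \<in> L" "e \<noteq> e'" unfolding L_def by auto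
    then have "(e \<in> A \<longleftrightarrow> e' \<in> B) \<longleftrightarrow> e' \<in> N"
      using AB(1,2) eL unfolding N_def by (cases "e \<in> A") auto
    then show "finite {c \<in> XC. dX c = 2 \<and> fX e c \<and> fX e' c} \<and>
      card {c \<in> XC. dX c = 2 \<and> fX e c \<and> fX e' c} = (if e' \<in> N then 1 else 0)"
      using link[rule_format, OF eL e'] by simp
  qed
qed

lemma card_cells_containing_edge:
  assumes PC: "polygonal_complex p XC dX fX" and LK: "links_Kvv v XC dX fX" and "3 \<le> p"
    and e: "e \<in> XC" "dX e = 1"
  shows "finite {c. fX e c}" and "card {c. fX e c} = v"
proof -
  have faceD: "\<And>a c. fX a c \<Longrightarrow> a \<in> XC \<and> c \<in> XC \<and> dX a < dX c"
    and dim_le: "\<And>c. c \<in> XC \<Longrightarrow> dX c \<le> 2"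
    and face_trans: "\<And>a b c. fX a b \<Longrightarrow> fX b c \<Longrightarrow> fX a c"
    and "card (vfaces dX fX e) = 2"
    using PC e unfolding polygonal_complex_def by blast+
  then have "vfaces dX fX e \<noteq> {}" by auto
  then obtain x where x: "fX x e" "dX x = 0" unfolding vfaces_def by blast
  have x_XC: "x \<in> XC" using faceD[OF x(1)] by blast
  define L where "L = {e' \<in> XC. dX e' = 1 \<and> fX x e'}"
  obtain N where finL: "finite L" and N: "N \<subseteq> L - {e}" "card N = v"
    and link: "\<And>e'. e' \<in> L - {e} \<Longrightarrow>
      finite {c \<in> XC. dX c = 2 \<and> fX e c \<and> fX e' c} \<and>
      card {c \<in> XC. dX c = 2 \<and> fX e c \<and> fX e' c} = (if e' \<in> N then 1 else 0)"
    using links_Kvv_neighbours[OF LK x_XC x(2) e x(1), folded L_def] by blast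
  define C where "C = {c. fX e c}"
  define F where "F e' = {c \<in> C. fX e' c}" for e'
  define Y where "Y c = {y. fX y c \<and> dX y = 1 \<and> fX x y}" for c
  have cell: "c \<in> XC" "dX c = 2" if "c \<in> C" for c
    using that faceD dim_le e(2) unfolding C_def by (fastforce, fastforce)
  have "F e' = {c \<in> XC. dX c = 2 \<and> fX e c \<and> fX e' c}" for e'
    using cell unfolding F_def C_def by auto
  then have F: "finite (F e')" "card (F e') = (if e' \<in> N then 1 else 0)" if "e' \<in> L - {e}" for e'
    using link[OF that] by simp_all
  have Y: "card (Y c) = 2" "e \<in> Y c" "Y c \<subseteq> L" if "c \<in> C" for c
    using polygonal_complex_card_edges_of_cell_at_vertex[OF PC \<open>3 \<le> p\<close> cell[OF that]]
      face_trans[OF x(1)] that x e faceD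
    unfolding Y_def C_def L_def by auto
  text \<open>Each cell containing \<open>e\<close> has exactly one edge at \<open>x\<close> besides \<open>e\<close>.\<close>
  have cover: "C = (\<Union>e' \<in> L - {e}. F e')"
  proof (intro equalityI subsetI)
    fix c assume c: "c \<in> C"
    have "\<not> Y c \<subseteq> {e}" using Y(1)[OF c] card_mono[of "{e}" "Y c"] by auto
    then obtain e' where "e' \<in> Y c" "e' \<noteq> e" by blast
    then show "c \<in> (\<Union>e' \<in> L - {e}. F e')" using c Y(3)[OF c] unfolding F_def Y_def by blast
  qed (auto simp: F_def)
  have disjoint: "F e1 \<inter> F e2 = {}" if "e1 \<in> L - {e}" "e2 \<in> L - {e}" "e1 \<noteq> e2" for e1 e2
  proof (rule ccontr)
    assume "F e1 \<inter> F e2 \<noteq> {}"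
    then obtain c where c: "c \<in> C" "fX e1 c" "fX e2 c" unfolding F_def by blast
    then have "{e, e1, e2} \<subseteq> Y c" using Y(2) that unfolding Y_def L_def by auto
    then have "card {e, e1, e2} \<le> 2" using card_mono Y(1)[OF c(1)]
      by (metis card.infinite zero_neq_numeral)
    moreover have "e \<noteq> e1" "e \<noteq> e2" "e1 \<noteq> e2" using that by auto
    ultimately show False by simp
  qed
  show "finite {c. fX e c}" using cover finL F(1) unfolding C_def by auto
  have "card C = (\<Sum>e' \<in> L - {e}. card (F e'))"
    unfolding cover by (rule card_UN_disjoint) (use finL F(1) disjoint in auto)
  also have "\<dots> = (\<Sum>e' \<in> L - {e}. if e' \<in> N then 1 else 0)" using F(2) by simp
  also have "\<dots> = card N"
    using N(1) finL by (simp add: sum.If_cases Int_absorb1)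
  finally show "card {c. fX e c} = v" using N(2) unfolding C_def by simp
qed

lemma (in group_action) stabilizer_image:
  assumes g: "g \<in> carrier G" and x: "x \<in> E"
  shows "stabilizer G \<phi> (\<phi> g x) = (\<lambda>h. g \<otimes> h \<otimes> inv g) ` stabilizer G \<phi> x"
proof -
  interpret group G using group_hom group_hom.axioms(1) by blast
  have gx: "\<phi> g x \<in> E" using element_image g x by blast
  have undo: "\<phi> (inv g) (\<phi> g x) = x" using orbit_sym_aux g x by blast
  show ?thesis
  proof (intro equalityI subsetI)
    fix h assume "h \<in> stabilizer G \<phi> (\<phi> g x)"
    then have h: "h \<in> carrier G" "\<phi> h (\<phi> g x) = \<phi> g x" unfolding stabilizer_def by auto
    have "\<phi> (inv g \<otimes> h \<otimes> g) x = \<phi> (inv g) (\<phi> h (\<phi> g x))"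
      using h g x gx by (simp add: composition_rule)
    then have "inv g \<otimes> h \<otimes> g \<in> stabilizer G \<phi> x"
      using h g undo unfolding stabilizer_def by simp
    moreover have "h = g \<otimes> (inv g \<otimes> h \<otimes> g) \<otimes> inv g"
      using h g by (metis inv_closed l_one m_assoc m_closed r_inv r_one)
    ultimately show "h \<in> (\<lambda>h. g \<otimes> h \<otimes> inv g) ` stabilizer G \<phi> x" by blast
  next
    fix h' assume "h' \<in> (\<lambda>h. g \<otimes> h \<otimes> inv g) ` stabilizer G \<phi> x"
    then obtain h where h: "h \<in> carrier G" "\<phi> h x = x" "h' = g \<otimes> h \<otimes> inv g"
      unfolding stabilizer_def by auto
    have "\<phi> h' (\<phi> g x) = \<phi> (g \<otimes> h) x"
      using h g gx undo by (simp add: composition_rule)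
    also have "\<dots> = \<phi> g x" using h g x by (simp add: composition_rule)
    finally show "h' \<in> stabilizer G \<phi> (\<phi> g x)"
      using h g unfolding stabilizer_def by simp
  qed
qed

lemma (in group_action) card_rcosets_stabilizer_eq_card_orbit_in_subgroup:
  assumes K: "subgroup K G" and x: "x \<in> E" and stab: "stabilizer G \<phi> x \<subseteq> K"
  shows "card (rcosets\<^bsub>G\<lparr>carrier := K\<rparr>\<^esub> (stabilizer G \<phi> x)) = card {\<phi> k x | k. k \<in> K}"
proof -
  interpret K: group_action "G\<lparr>carrier := K\<rparr>" E \<phi> using induced_action[OF K] .
  have "stabilizer (G\<lparr>carrier := K\<rparr>) \<phi> x = stabilizer G \<phi> x"
    using stab subgroup.subset[OF K] unfolding stabilizer_def by auto
  moreover have "orbit (G\<lparr>carrier := K\<rparr>) \<phi> x = {\<phi> k x | k. k \<in> K}"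
    unfolding orbit_def by simp
  ultimately show ?thesis
    using K.orbit_stab_fun_is_bij[OF x] bij_betw_same_card by fastforce
qed

lemma acts_without_inversions_group_action:
  assumes "acts_without_inversions H act XC dX fX"
  shows "group_action H XC (\<lambda>h. restrict (act h) XC)"
proof -
  have H: "group H" and bij: "\<And>h. h \<in> carrier H \<Longrightarrow> bij_betw (act h) XC XC"
    and mult: "\<And>g h x. g \<in> carrier H \<Longrightarrow> h \<in> carrier H \<Longrightarrow> x \<in> XC \<Longrightarrow>
        act (g \<otimes>\<^bsub>H\<^esub> h) x = act g (act h x)"
    using assms unfolding acts_without_inversions_def by blast+
  have Bij: "restrict (act h) XC \<in> Bij XC" if "h \<in> carrier H" for h
    using bij[OF that] unfolding Bij_def by simp
  have "(\<lambda>h. restrict (act h) XC) \<in> hom H (BijGroup XC)"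
  proof (rule homI)
    fix g h assume g: "g \<in> carrier H" and h: "h \<in> carrier H"
    have "restrict (act g) XC \<otimes>\<^bsub>BijGroup XC\<^esub> restrict (act h) XC
        = compose XC (restrict (act g) XC) (restrict (act h) XC)"
      using Bij g h by (simp add: BijGroup_def)
    also have "\<dots> = restrict (act (g \<otimes>\<^bsub>H\<^esub> h)) XC"
      using g h mult bij_betw_apply[OF bij[OF h]] by (auto simp: compose_def)
    finally show "restrict (act (g \<otimes>\<^bsub>H\<^esub> h)) XC
        = restrict (act g) XC \<otimes>\<^bsub>BijGroup XC\<^esub> restrict (act h) XC" ..
  qed (simp add: BijGroup_def Bij)
  then show ?thesis
    unfolding group_action_def group_hom_def group_hom_axioms_def
    using H group_BijGroup by blast
qed

lemma card_rcosets_iso_image: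
  assumes G: "group G" and iso: "f \<in> iso G G'" and K: "K \<subseteq> carrier G"
  shows "card (rcosets\<^bsub>G'\<^esub> (f ` K)) = card (rcosets\<^bsub>G\<^esub> K)"
proof -
  have hom: "f \<in> hom G G'" and inj: "inj_on f (carrier G)" and surj: "f ` carrier G = carrier G'"
    using iso unfolding iso_def bij_betw_def by auto
  have coset: "f ` K #>\<^bsub>G'\<^esub> f g = f ` (K #>\<^bsub>G\<^esub> g)" if "g \<in> carrier G" for g
    unfolding r_coset_def using hom K that by (force simp: hom_mult)
  have "rcosets\<^bsub>G'\<^esub> (f ` K) = (\<lambda>g. f ` K #>\<^bsub>G'\<^esub> f g) ` carrier G"
    unfolding RCOSETS_def surj[symmetric] by auto
  also have "\<dots> = (\<lambda>C. f ` C) ` (rcosets\<^bsub>G\<^esub> K)"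
    unfolding RCOSETS_def using coset by auto
  finally have rcosets: "rcosets\<^bsub>G'\<^esub> (f ` K) = (\<lambda>C. f ` C) ` (rcosets\<^bsub>G\<^esub> K)" .
  have "\<And>C. C \<in> rcosets\<^bsub>G\<^esub> K \<Longrightarrow> C \<subseteq> carrier G"
    unfolding RCOSETS_def using K monoid.r_coset_subset_G[OF group.is_monoid[OF G]] by auto
  then have "inj_on (\<lambda>C. f ` C) (rcosets\<^bsub>G\<^esub> K)"
    by (intro inj_onI) (metis inj inj_on_image_eq_iff)
  then show ?thesis unfolding rcosets by (rule card_image)
qed

lemma stab_eq_stabilizer:
  "x \<in> XC \<Longrightarrow> stab H act x = stabilizer H (\<lambda>h. restrict (act h) XC) x"
  by (simp add: stab_def stabilizer_def)

lemma card_rcosets_stab_eq_card_orbit: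
  assumes A: "acts_without_inversions H act XC dX fX"
    and "e \<in> XC" "c \<in> XC" "fX e c"
  shows "card (rcosets\<^bsub>H\<lparr>carrier := stab H act e\<rparr>\<^esub> (stab H act c))
       = card {act h c | h. h \<in> stab H act e}"
proof -
  interpret group_action H XC "\<lambda>h. restrict (act h) XC"
    using acts_without_inversions_group_action[OF A] .
  have "stab H act c \<subseteq> stab H act e"
    using A assms(3,4) unfolding acts_without_inversions_def stab_def by blast
  moreover have "{restrict (act h) XC c | h. h \<in> stab H act e} = {act h c | h. h \<in> stab H act e}"
    using assms(3) by simp
  ultimately show ?thesis
    using card_rcosets_stabilizer_eq_card_orbit_in_subgroup[of "stab H act e" c]
      stabilizer_subgroup[OF assms(2)] assms(2,3) by (simp add: stab_eq_stabilizer)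
qed

lemma quotient_iso_fiber_eq_orbit:
  assumes A: "acts_without_inversions H act XC dX fX"
    and Q: "quotient_iso H act XC dX fX V E src tgt cmp dimY pv pe"
    and e: "e \<in> XC" and c: "c \<in> XC" "fX e c"
  shows "{c'. fX e c' \<and> pe c' e = pe c e} = {act h c | h. h \<in> stab H act e}"
proof -
  have same_edge: "\<And>a c a' c'. fX a c \<Longrightarrow> fX a' c' \<Longrightarrow>
      (pe c a = pe c' a' \<longleftrightarrow> (\<exists>h\<in>carrier H. act h c = c' \<and> act h a = a'))"
    using Q unfolding quotient_iso_def by blast
  have face_act: "\<And>h. h \<in> carrier H \<Longrightarrow> fX (act h e) (act h c) = fX e c"
    using A e c unfolding acts_without_inversions_def by blast
  show ?thesis
  proof (intro equalityI subsetI)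
    fix c' assume "c' \<in> {c'. fX e c' \<and> pe c' e = pe c e}"
    then show "c' \<in> {act h c | h. h \<in> stab H act e}"
      using same_edge[OF c(2), of e c'] unfolding stab_def by auto
  next
    fix c' assume "c' \<in> {act h c | h. h \<in> stab H act e}"
    then obtain h where h: "h \<in> carrier H" "act h e = e" "c' = act h c"
      unfolding stab_def by blast
    then have "fX e c'" using face_act c(2) by metis
    moreover have "pe c' e = pe c e" using same_edge[OF c(2) \<open>fX e c'\<close>] h by metis
    ultimately show "c' \<in> {c'. fX e c' \<and> pe c' e = pe c e}" by blast
  qed
qed

lemma cog_iso_image_psi_eq_stab:
  fixes H :: "'h monoid" (structure)
  assumes A: "acts_without_inversions H act XC dX fX"
    and CG: "complex_of_groups V E src tgt cmp Gs psi tw"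
    and LD: "lift_data H act XC fX V E src tgt pv pe lift hs"
    and CI: "cog_iso V E src tgt cmp Gs psi tw
        (ind_group H act lift) (ind_psi H hs) (ind_tw H hs cmp) phi phie"
    and a: "a \<in> E"
  shows "phi (tgt a) ` psi a ` carrier (Gs (src a))
       = stab H act (act (phie a \<otimes> hs a) (lift (src a)))"
proof -
  interpret group_action H XC "\<lambda>h. restrict (act h) XC"
    using acts_without_inversions_group_action[OF A] .
  interpret H: group H using A unfolding acts_without_inversions_def by blast
  have V: "src a \<in> V" "tgt a \<in> V" using CG a unfolding complex_of_groups_def by blast+
  have lifts: "lift (src a) \<in> XC" "lift (tgt a) \<in> XC" and ha: "hs a \<in> carrier H"
    using LD V a unfolding lift_data_def by blast+
  define k where "k = phie a"
  have k: "k \<in> stab H act (lift (tgt a))"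
    and local_map: "\<And>x. x \<in> carrier (Gs (src a)) \<Longrightarrow> phi (tgt a) (psi a x)
       = k \<otimes>\<^bsub>ind_group H act lift (tgt a)\<^esub> ind_psi H hs a (phi (src a) x)
           \<otimes>\<^bsub>ind_group H act lift (tgt a)\<^esub> inv\<^bsub>ind_group H act lift (tgt a)\<^esub> k"
    using CI a unfolding cog_iso_def k_def by (auto simp: ind_group_def)
  have "subgroup (stab H act (lift (tgt a))) H"
    using stabilizer_subgroup[OF lifts(2)] lifts(2) by (simp add: stab_eq_stabilizer)
  then have inv_k: "inv\<^bsub>H\<lparr>carrier := stab H act (lift (tgt a))\<rparr>\<^esub> k = inv k"
    using H.m_inv_consistent k by blast
  have kH: "k \<in> carrier H" using k unfolding stab_def by blast
  have phi_src: "phi (src a) ` carrier (Gs (src a)) = stab H act (lift (src a))"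
    using CI V(1) unfolding cog_iso_def iso_def bij_betw_def by (simp add: ind_group_def)
  have "phi (tgt a) (psi a x) = (k \<otimes> hs a) \<otimes> phi (src a) x \<otimes> inv (k \<otimes> hs a)"
    if "x \<in> carrier (Gs (src a))" for x
  proof -
    have "phi (src a) x \<in> carrier H" using phi_src that unfolding stab_def by blast
    then show ?thesis
      using local_map[OF that] kH ha by (simp add: ind_group_def inv_k ind_psi_def H.m_assoc H.inv_mult_group)
  qed
  then have "phi (tgt a) ` psi a ` carrier (Gs (src a))
      = (\<lambda>h. (k \<otimes> hs a) \<otimes> h \<otimes> inv (k \<otimes> hs a)) ` phi (src a) ` carrier (Gs (src a))"
    by (simp add: image_image)
  also have "\<dots> = stab H act (act (k \<otimes> hs a) (lift (src a)))"
  proof -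
    have "k \<otimes> hs a \<in> carrier H" using kH ha by blast
    moreover from this have "act (k \<otimes> hs a) (lift (src a)) \<in> XC"
      using element_image lifts(1) by fastforce
    ultimately show ?thesis
      using stabilizer_image[of "k \<otimes> hs a" "lift (src a)"] lifts(1)
      by (simp add: phi_src stab_eq_stabilizer)
  qed
  finally show ?thesis unfolding k_def .
qed

lemma induced_indexing_eq_card_fiber:
  fixes H :: "'h monoid" (structure)
  assumes A: "acts_without_inversions H act XC dX fX"
    and Q: "quotient_iso H act XC dX fX V E src tgt cmp dimY pv pe"
    and CG: "complex_of_groups V E src tgt cmp Gs psi tw"
    and LD: "lift_data H act XC fX V E src tgt pv pe lift hs"
    and CI: "cog_iso V E src tgt cmp Gs psi tw
        (ind_group H act lift) (ind_psi H hs) (ind_tw H hs cmp) phi phie"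
    and a: "a \<in> E"
  shows "induced_indexing src tgt Gs psi a
       = card {c. fX (lift (tgt a)) c \<and> pe c (lift (tgt a)) = a}"
proof -
  interpret group_action H XC "\<lambda>h. restrict (act h) XC"
    using acts_without_inversions_group_action[OF A] .
  interpret H: group H using A unfolding acts_without_inversions_def by blast
  define e c0 k where "e = lift (tgt a)" and "c0 = lift (src a)" and "k = phie a"
  define c where "c = act (k \<otimes> hs a) c0"
  have V: "src a \<in> V" "tgt a \<in> V" and psi: "psi a \<in> hom (Gs (src a)) (Gs (tgt a))"
    using CG a unfolding complex_of_groups_def by blast+
  have e: "e \<in> XC" and c0: "c0 \<in> XC" and ha: "hs a \<in> carrier H"
    and ca: "fX e (act (hs a) c0)" "pe (act (hs a) c0) e = a"
    using LD V a unfolding lift_data_def e_def c0_def by blast+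
  have k: "k \<in> stab H act e"
    using CI a unfolding cog_iso_def k_def e_def by (simp add: ind_group_def)
  then have kH: "k \<in> carrier H" unfolding stab_def by blast
  have ca_XC: "act (hs a) c0 \<in> XC" using element_image ha c0 by fastforce
  have "c = act k (act (hs a) c0)"
    using A kH ha c0 unfolding c_def acts_without_inversions_def by blast
  then have "c \<in> {act h (act (hs a) c0) | h. h \<in> stab H act e}" using k by blast
  then have "c \<in> {c'. fX e c' \<and> pe c' e = a}"
    unfolding quotient_iso_fiber_eq_orbit[OF A Q e ca_XC ca(1), symmetric] ca(2) .
  then have c: "fX e c" "pe c e = a" "c \<in> XC"
    using element_image H.m_closed[OF kH ha] c0 unfolding c_def by fastforce+
  have "induced_indexing src tgt Gs psi a = card (rcosets\<^bsub>Gs (tgt a)\<^esub> (psi a ` carrier (Gs (src a))))"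
    unfolding induced_indexing_def ..
  also have "\<dots> = card (rcosets\<^bsub>ind_group H act lift (tgt a)\<^esub>
      (phi (tgt a) ` psi a ` carrier (Gs (src a))))"
  proof -
    have "group (Gs (tgt a))" using CG V(2) unfolding complex_of_groups_def by blast
    moreover have "phi (tgt a) \<in> iso (Gs (tgt a)) (ind_group H act lift (tgt a))"
      using CI V(2) unfolding cog_iso_def by blast
    moreover have "psi a ` carrier (Gs (src a)) \<subseteq> carrier (Gs (tgt a))"
      using psi by (auto simp: hom_def)
    ultimately show ?thesis by (simp add: card_rcosets_iso_image)
  qed
  also have "\<dots> = card (rcosets\<^bsub>H\<lparr>carrier := stab H act e\<rparr>\<^esub> (stab H act c))"
    unfolding cog_iso_image_psi_eq_stab[OF A CG LD CI a]
    by (simp add: ind_group_def e_def c_def k_def c0_def)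
  also have "\<dots> = card {act h c | h. h \<in> stab H act e}"
    using card_rcosets_stab_eq_card_orbit[OF A e c(3,1)] .
  also have "\<dots> = card {c'. fX e c' \<and> pe c' e = a}"
    using quotient_iso_fiber_eq_orbit[OF A Q e c(3,1)] c(2) by simp
  finally show ?thesis unfolding e_def .
qed

lemma quotient_iso_edges_into_eq_image:
  assumes Q: "quotient_iso H act XC dX fX V E src tgt cmp dimY pv pe"
    and LD: "lift_data H act XC fX V E src tgt pv pe lift hs"
    and \<sigma>: "\<sigma> \<in> V"
  shows "{a \<in> E. tgt a = \<sigma>} = (\<lambda>c. pe c (lift \<sigma>)) ` {c. fX (lift \<sigma>) c}"
proof (intro equalityI subsetI)
  fix a assume "a \<in> {a \<in> E. tgt a = \<sigma>}"
  then show "a \<in> (\<lambda>c. pe c (lift \<sigma>)) ` {c. fX (lift \<sigma>) c}"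
    using LD unfolding lift_data_def by force
next
  fix a assume "a \<in> (\<lambda>c. pe c (lift \<sigma>)) ` {c. fX (lift \<sigma>) c}"
  then obtain c where "fX (lift \<sigma>) c" "a = pe c (lift \<sigma>)" by blast
  moreover have "pv (lift \<sigma>) = \<sigma>" using LD \<sigma> unfolding lift_data_def by blast
  moreover have "pe c (lift \<sigma>) \<in> E" "tgt (pe c (lift \<sigma>)) = pv (lift \<sigma>)"
    using Q \<open>fX (lift \<sigma>) c\<close> unfolding quotient_iso_def by blast+
  ultimately show "a \<in> {a \<in> E. tgt a = \<sigma>}" by simp
qed

theorem lemma4p3:
  fixes p v :: nat
    and V :: "'v set" and E :: "'e set" and src tgt :: "'e \<Rightarrow> 'v"
    and cmp :: "'e \<Rightarrow> 'e \<Rightarrow> 'e" and dimY :: "'v \<Rightarrow> nat"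
    and Gs :: "'v \<Rightarrow> 'g monoid" and psi :: "'e \<Rightarrow> 'g \<Rightarrow> 'g" and tw :: "'e \<Rightarrow> 'e \<Rightarrow> 'g"
    and XC :: "'x set" and dX :: "'x \<Rightarrow> nat" and fX :: "'x \<Rightarrow> 'x \<Rightarrow> bool"
    and H :: "'h monoid" and act :: "'h \<Rightarrow> 'x \<Rightarrow> 'x"
    and pv :: "'x \<Rightarrow> 'v" and pe :: "'x \<Rightarrow> 'x \<Rightarrow> 'e" and lift :: "'v \<Rightarrow> 'x" and hs :: "'e \<Rightarrow> 'h"
    and phi :: "'v \<Rightarrow> 'g \<Rightarrow> 'h" and phie :: "'e \<Rightarrow> 'h"
  assumes "p \<ge> 5" and "v \<ge> 2"
    and "complex_of_groups V E src tgt cmp Gs psi tw"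
    and "bourdon_building p v XC dX fX"
    and "developable_with_cover XC dX fX H act pv pe lift hs phi phie V E src tgt cmp dimY Gs psi tw"
  shows "v_thick v V E tgt dimY (induced_indexing src tgt Gs psi)"
  unfolding v_thick_def
proof (intro ballI impI)
  fix \<sigma> assume \<sigma>: "\<sigma> \<in> V" "dimY \<sigma> = 1"
  have PC: "polygonal_complex p XC dX fX" and LK: "links_Kvv v XC dX fX"
    using assms(4) unfolding bourdon_building_def by auto
  have A: "acts_without_inversions H act XC dX fX"
    and Q: "quotient_iso H act XC dX fX V E src tgt cmp dimY pv pe"
    and LD: "lift_data H act XC fX V E src tgt pv pe lift hs"
    and CI: "cog_iso V E src tgt cmp Gs psi tw
        (ind_group H act lift) (ind_psi H hs) (ind_tw H hs cmp) phi phie"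
    using assms(5) unfolding developable_with_cover_def by auto
  define e where "e = lift \<sigma>"
  define C where "C = {c. fX e c}"
  have e: "e \<in> XC" "pv e = \<sigma>" using LD \<sigma>(1) unfolding lift_data_def e_def by blast+
  then have "dX e = 1" using Q \<sigma>(2) unfolding quotient_iso_def by metis
  with e(1) have C: "finite C" "card C = v"
    using card_cells_containing_edge[OF PC LK] \<open>p \<ge> 5\<close> unfolding C_def by auto
  have "(\<Sum>a \<in> {a \<in> E. tgt a = \<sigma>}. induced_indexing src tgt Gs psi a)
      = (\<Sum>a \<in> (\<lambda>c. pe c e) ` C. card {c \<in> C. pe c e = a})"
    using induced_indexing_eq_card_fiber[OF A Q assms(3) LD CI]
    unfolding quotient_iso_edges_into_eq_image[OF Q LD \<sigma>(1), folded e_def, symmetric] C_def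
    by (intro sum.cong) (auto simp: e_def)
  also have "\<dots> = card C"
    unfolding card_eq_sum by (rule sum.group[OF C(1) finite_imageI[OF C(1)] subset_refl])
  finally show "(\<Sum>a \<in> {a \<in> E. tgt a = \<sigma>}. induced_indexing src tgt Gs psi a) = v"
    using C(2) by simp
qed

end
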